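(* Let $n\ge 2$ and let $v_1,\dots,v_N\in S^{n-1}$ be unit vectors that are not contained in any closed hemisphere and are in general position in dimension $n$. Let $(P_i)$ be a sequence of polytopes in $\mathcal P(v_1,\dots,v_N)$. If the outer radii $R_i$ of $P_i$ are not uniformly bounded in $i$, then the inner radii $r_i$ of $P_i$ are not uniformly bounded in $i$ either.
   Context: Unit vectors are in general position in dimension $n$ if any $n$ of them are linearly independent. $\mathcal P(v_1,\dots,v_N)$ is the set of polytopes in $\mathbb R^n$ (with nonempty interior) all of whose facet outer unit normals belong to $\{v_1,\dots,v_N\}$; equivalently sets $\{x: x\cdot v_j\le z_j,\ j=1,\dots,N\}$ with nonempty interior. The outer radius of a convex body is the smallest radius of a Euclidean ball containing it; the inner radius is the largest radius of a Euclidean ball contained in it. *)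

theory Defs
  imports "HOL-Analysis.Analysis"
begin

definition general_position :: "nat \<Rightarrow> (nat \<Rightarrow> 'a::euclidean_space) \<Rightarrow> bool" where
  "general_position N v \<longleftrightarrow>
     (\<forall>I. I \<subseteq> {..<N} \<and> card I = DIM('a) \<longrightarrow> inj_on v I \<and> independent (v ` I))"

definition not_in_closed_hemisphere :: "nat \<Rightarrow> (nat \<Rightarrow> 'a::euclidean_space) \<Rightarrow> bool" where
  "not_in_closed_hemisphere N v \<longleftrightarrow>
     \<not> (\<exists>u. norm u = 1 \<and> (\<forall>j<N. v j \<bullet> u \<ge> 0))"

definition polytope_class :: "nat \<Rightarrow> (nat \<Rightarrow> 'a::euclidean_space) \<Rightarrow> 'a set set" where
  "polytope_class N v =
     {P. interior P \<noteq> {} \<and> (\<exists>z::nat \<Rightarrow> real. P = {x. \<forall>j<N. x \<bullet> v j \<le> z j})}"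

definition outer_radius :: "'a::euclidean_space set \<Rightarrow> real" where
  "outer_radius K = Inf {r. \<exists>c. K \<subseteq> cball c r}"

definition inner_radius :: "'a::euclidean_space set \<Rightarrow> real" where
  "inner_radius K = Sup {r. r \<ge> 0 \<and> (\<exists>c. cball c r \<subseteq> K)}"

end

theory Submission
  imports Defs
begin

text \<open>If a and b realise the diameter D of a polytope P, the midpoint of a and b satisfies each
  facet inequality x \<bullet> v_j \<le> z_j with slack at least |(b - a) \<bullet> v_j| / 2. By general position fewer
  than n of the v_j are almost orthogonal to b - a, so all other facets have slack of order \<delta> D.
  The few almost orthogonal v_j are linearly independent, so a vector w of bounded norm with
  w \<bullet> v_j = -1 for all of them moves the midpoint away from those facets as well. This yields a
  ball of radius \<kappa> D inside P with \<kappa> > 0 depending only on the v_j, hence r(P) \<ge> \<kappa> R(P).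
  The hemisphere condition makes every polytope of the class bounded.\<close>

lemma compact_finite_positive_imp_uniform:
  fixes f :: "'i \<Rightarrow> 'a::topological_space \<Rightarrow> real"
  assumes "compact S" and "finite I"
    and cont: "\<And>i. i \<in> I \<Longrightarrow> continuous_on S (f i)"
    and pos: "\<And>x. x \<in> S \<Longrightarrow> \<exists>i\<in>I. 0 < f i x"
  shows "\<exists>\<epsilon>>0. \<forall>x\<in>S. \<exists>i\<in>I. \<epsilon> \<le> f i x"
proof (cases "S = {}")
  case True
  then show ?thesis by (intro exI[of _ 1]) auto
next
  case False
  define g where "g x = (\<Sum>i\<in>I. max 0 (f i x))" for x
  have "continuous_on S g"
    unfolding g_def using cont by (intro continuous_intros) auto
  then obtain x0 where "x0 \<in> S" and x0: "\<And>x. x \<in> S \<Longrightarrow> g x0 \<le> g x"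
    using continuous_attains_inf[OF \<open>compact S\<close> False] by blast
  obtain i0 where "i0 \<in> I" and "0 < f i0 x0"
    using pos[OF \<open>x0 \<in> S\<close>] by blast
  have "max 0 (f i0 x0) \<le> g x0"
    unfolding g_def using \<open>finite I\<close> \<open>i0 \<in> I\<close> by (intro member_le_sum) auto
  moreover have card_pos: "0 < card I"
    using \<open>finite I\<close> \<open>i0 \<in> I\<close> by (auto simp: card_gt_0_iff)
  ultimately have "0 < g x0 / card I"
    using \<open>0 < f i0 x0\<close> by (intro divide_pos_pos) auto
  moreover have "\<exists>i\<in>I. g x0 / card I \<le> f i x" if "x \<in> S" for x
  proof -
    let ?m = "Max ((\<lambda>i. max 0 (f i x)) ` I)"
    have "?m \<in> (\<lambda>i. max 0 (f i x)) ` I"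
      using \<open>finite I\<close> \<open>i0 \<in> I\<close> by (intro Max_in) auto
    then obtain i where "i \<in> I" and i: "?m = max 0 (f i x)"
      by blast
    have "g x \<le> card I * ?m"
      unfolding g_def using \<open>finite I\<close> by (intro sum_bounded_above Max_ge) auto
    then have "g x0 \<le> card I * ?m"
      using x0[OF that] by linarith
    then have "g x0 / card I \<le> max 0 (f i x)"
      using i card_pos by (simp add: pos_divide_le_eq mult.commute)
    with \<open>0 < g x0 / card I\<close> \<open>i \<in> I\<close> show ?thesis by (metis max_def not_le)
  qed
  ultimately show ?thesis by blast
qed

lemma finite_inner_positive_imp_uniform:
  fixes B :: "'a::euclidean_space set"
  assumes "finite B" and pos: "\<And>x. x \<noteq> 0 \<Longrightarrow> \<exists>b\<in>B. 0 < b \<bullet> x"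
  shows "\<exists>\<epsilon>>0. \<forall>x. \<exists>b\<in>B. \<epsilon> * norm x \<le> b \<bullet> x"
proof -
  have "\<exists>b\<in>B. 0 < b \<bullet> u" if "u \<in> sphere 0 1" for u
    using pos[of u] that by fastforce
  moreover have "continuous_on (sphere 0 1) (\<lambda>u. b \<bullet> u)" for b :: 'a
    by (intro continuous_intros)
  ultimately obtain \<epsilon> where "\<epsilon> > 0" and \<epsilon>: "\<And>u. u \<in> sphere 0 1 \<Longrightarrow> \<exists>b\<in>B. \<epsilon> \<le> b \<bullet> u"
    using compact_finite_positive_imp_uniform[of "sphere 0 1" B "\<lambda>b u. b \<bullet> u"]
      compact_sphere \<open>finite B\<close> by blast
  have "\<exists>b\<in>B. \<epsilon> * norm x \<le> b \<bullet> x" for x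
  proof (cases "x = 0")
    case True
    obtain u :: 'a where "u \<in> sphere 0 1"
      using vector_choose_size[of 1] by auto
    with \<epsilon> True show ?thesis by auto
  next
    case False
    then obtain b where "b \<in> B" and "\<epsilon> \<le> b \<bullet> (x /\<^sub>R norm x)"
      using \<epsilon>[of "x /\<^sub>R norm x"] by auto
    with False show ?thesis by (auto simp: field_simps)
  qed
  with \<open>\<epsilon> > 0\<close> show ?thesis by blast
qed

lemma spanning_inner_abs_uniform:
  fixes B :: "'a::euclidean_space set"
  assumes "finite B" and "span B = UNIV"
  shows "\<exists>\<delta>>0. \<forall>x. \<exists>b\<in>B. \<delta> * norm x \<le> \<bar>b \<bullet> x\<bar>"
proof -
  have "\<exists>b\<in>B \<union> uminus ` B. 0 < b \<bullet> x" if "x \<noteq> 0" for x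
  proof -
    have "\<not> orthogonal x x"
      using that by (simp add: orthogonal_def)
    then obtain b where "b \<in> B" and "\<not> orthogonal x b"
      using orthogonal_to_span[of x B x] \<open>span B = UNIV\<close> by blast
    then have "b \<bullet> x \<noteq> 0"
      by (simp add: orthogonal_def inner_commute)
    then show ?thesis
    proof (cases "0 < b \<bullet> x")
      case True
      with \<open>b \<in> B\<close> show ?thesis by blast
    next
      case False
      with \<open>b \<bullet> x \<noteq> 0\<close> \<open>b \<in> B\<close> show ?thesis
        by (intro bexI[of _ "- b"]) auto
    qed
  qed
  then obtain \<delta> where "\<delta> > 0" and \<delta>: "\<And>x. \<exists>b\<in>B \<union> uminus ` B. \<delta> * norm x \<le> b \<bullet> x"
    using finite_inner_positive_imp_uniform[of "B \<union> uminus ` B"] \<open>finite B\<close> by blast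
  have "\<exists>b\<in>B. \<delta> * norm x \<le> \<bar>b \<bullet> x\<bar>" for x
    using \<delta>[of x] by (auto; meson abs_ge_self abs_ge_minus_self order_trans)
  with \<open>\<delta> > 0\<close> show ?thesis by blast
qed

lemma not_in_closed_hemisphere_DIM_le:
  fixes v :: "nat \<Rightarrow> 'a::euclidean_space"
  assumes "not_in_closed_hemisphere N v"
  shows "DIM('a) \<le> N"
proof (rule ccontr)
  assume "\<not> DIM('a) \<le> N"
  then have "dim (v ` {..<N}) < DIM('a)"
    using dim_le_card'[of "v ` {..<N}"] card_image_le[of "{..<N}" v] by simp
  then obtain x where "x \<noteq> 0" and x: "\<And>y. y \<in> span (v ` {..<N}) \<Longrightarrow> orthogonal x y"
    using orthogonal_to_subspace_exists by blast
  have "v j \<bullet> x = 0" if "j < N" for j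
    using x[of "v j"] that by (simp add: span_base orthogonal_def inner_commute)
  then have "\<forall>j<N. 0 \<le> v j \<bullet> (x /\<^sub>R norm x)"
    by simp
  moreover have "norm (x /\<^sub>R norm x) = 1"
    using \<open>x \<noteq> 0\<close> by simp
  ultimately show False
    using assms unfolding not_in_closed_hemisphere_def by blast
qed

lemma not_in_closed_hemisphere_uniform:
  fixes v :: "nat \<Rightarrow> 'a::euclidean_space"
  assumes "not_in_closed_hemisphere N v"
  shows "\<exists>\<eta>>0. \<forall>x. \<exists>j<N. \<eta> * norm x \<le> v j \<bullet> x"
proof -
  have "\<exists>b\<in>v ` {..<N}. 0 < b \<bullet> x" if "x \<noteq> 0" for x
  proof (rule ccontr)
    assume "\<not> ?thesis"
    then have "\<forall>j<N. 0 \<le> v j \<bullet> (- x /\<^sub>R norm x)"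
      by (auto simp: not_less intro!: mult_nonneg_nonpos)
    moreover have "norm (- x /\<^sub>R norm x) = 1"
      using that by simp
    ultimately show False
      using assms unfolding not_in_closed_hemisphere_def by blast
  qed
  then show ?thesis
    using finite_inner_positive_imp_uniform[of "v ` {..<N}"] by blast
qed

lemma polyhedron_bounded:
  fixes v :: "nat \<Rightarrow> 'a::euclidean_space"
  assumes "not_in_closed_hemisphere N v"
  shows "bounded {x. \<forall>j<N. x \<bullet> v j \<le> z j}"
proof -
  obtain \<eta> where "\<eta> > 0" and \<eta>: "\<And>x. \<exists>j<N. \<eta> * norm x \<le> v j \<bullet> x"
    using not_in_closed_hemisphere_uniform[OF assms] by blast
  have "norm x \<le> (\<Sum>j<N. \<bar>z j\<bar>) / \<eta>" if "\<forall>j<N. x \<bullet> v j \<le> z j" for x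
  proof -
    obtain j where "j < N" and j: "\<eta> * norm x \<le> v j \<bullet> x"
      using \<eta> by blast
    note j
    also have "\<dots> \<le> z j"
      using that \<open>j < N\<close> by (simp add: inner_commute)
    also have "\<dots> \<le> \<bar>z j\<bar>"
      by simp
    also have "\<dots> \<le> (\<Sum>j<N. \<bar>z j\<bar>)"
      using \<open>j < N\<close> by (intro member_le_sum) auto
    finally show ?thesis
      using \<open>\<eta> > 0\<close> by (simp add: field_simps)
  qed
  then show ?thesis
    unfolding bounded_iff by blast
qed

lemma general_position_card_almost_orthogonal_less:
  fixes v :: "nat \<Rightarrow> 'a::euclidean_space"
  assumes "general_position N v"
  shows "\<exists>\<delta>>0. \<forall>x. card {j. j < N \<and> \<bar>v j \<bullet> x\<bar> < \<delta> * norm x} < DIM('a)"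
proof -
  define bases where "bases = {I. I \<subseteq> {..<N} \<and> card I = DIM('a)}"
  have "finite bases"
    unfolding bases_def by (rule finite_subset[of _ "Pow {..<N}"]) auto
  have "eventually (\<lambda>\<delta>. \<forall>x. \<exists>j\<in>I. \<delta> * norm x \<le> \<bar>v j \<bullet> x\<bar>) (at_right 0)"
    if "I \<in> bases" for I
  proof -
    have "I \<subseteq> {..<N}" "card I = DIM('a)" "inj_on v I" "independent (v ` I)"
      using that assms unfolding bases_def general_position_def by auto
    then have "span (v ` I) = UNIV"
      using card_ge_dim_independent[of "v ` I" UNIV] by (auto simp: card_image dim_UNIV)
    then obtain d where "d > 0" and d: "\<And>x. \<exists>b\<in>v ` I. d * norm x \<le> \<bar>b \<bullet> x\<bar>"
      using spanning_inner_abs_uniform[of "v ` I"] finite_subset[OF \<open>I \<subseteq> {..<N}\<close>] by blast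
    have "\<exists>j\<in>I. \<delta> * norm x \<le> \<bar>v j \<bullet> x\<bar>" if "\<delta> < d" for \<delta> x
    proof -
      obtain j where "j \<in> I" and "d * norm x \<le> \<bar>v j \<bullet> x\<bar>"
        using d[of x] by blast
      moreover have "\<delta> * norm x \<le> d * norm x"
        using \<open>\<delta> < d\<close> by (simp add: mult_right_mono)
      ultimately show ?thesis by force
    qed
    with \<open>d > 0\<close> show ?thesis
      unfolding eventually_at_right_field by blast
  qed
  then have "eventually (\<lambda>\<delta>. \<forall>I\<in>bases. \<forall>x. \<exists>j\<in>I. \<delta> * norm x \<le> \<bar>v j \<bullet> x\<bar>) (at_right 0)"
    using \<open>finite bases\<close> by (simp add: eventually_ball_finite)
  moreover have "eventually (\<lambda>\<delta>::real. 0 < \<delta>) (at_right 0)"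
    by (simp add: eventually_at_right_less)
  ultimately have "eventually (\<lambda>\<delta>. 0 < \<delta> \<and> (\<forall>I\<in>bases. \<forall>x. \<exists>j\<in>I. \<delta> * norm x \<le> \<bar>v j \<bullet> x\<bar>)) (at_right 0)"
    by eventually_elim blast
  then obtain \<delta> where "0 < \<delta>" and \<delta>: "\<And>I x. I \<in> bases \<Longrightarrow> \<exists>j\<in>I. \<delta> * norm x \<le> \<bar>v j \<bullet> x\<bar>"
    using eventually_happens'[OF trivial_limit_at_right_real] by blast
  have "card {j. j < N \<and> \<bar>v j \<bullet> x\<bar> < \<delta> * norm x} < DIM('a)" for x
  proof (rule ccontr)
    assume "\<not> ?thesis"
    then have "DIM('a) \<le> card {j. j < N \<and> \<bar>v j \<bullet> x\<bar> < \<delta> * norm x}"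
      by simp
    then obtain I where I: "I \<subseteq> {j. j < N \<and> \<bar>v j \<bullet> x\<bar> < \<delta> * norm x}" "card I = DIM('a)"
      by (rule obtain_subset_with_card_n)
    then have "I \<in> bases"
      unfolding bases_def by blast
    then obtain j where "j \<in> I" "\<delta> * norm x \<le> \<bar>v j \<bullet> x\<bar>"
      using \<delta> by blast
    with I(1) show False by auto
  qed
  with \<open>0 < \<delta>\<close> show ?thesis by blast
qed

lemma independent_exists_inner_eq:
  fixes B :: "'a::euclidean_space set"
  assumes "independent B"
  shows "\<exists>w. \<forall>b\<in>B. w \<bullet> b = f b"
proof -
  obtain g :: "'a \<Rightarrow> real" where "linear g" and g: "\<forall>b\<in>B. g b = f b"
    using linear_independent_extend[OF assms] by blast
  have "adjoint g 1 \<bullet> b = g b" for b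
    using adjoint_works[OF \<open>linear g\<close>, of b 1] by (simp add: inner_commute)
  with g show ?thesis by metis
qed

lemma general_position_independent_subset:
  fixes v :: "nat \<Rightarrow> 'a::euclidean_space"
  assumes "general_position N v" and "DIM('a) \<le> N"
    and "J \<subseteq> {..<N}" and "card J \<le> DIM('a)"
  shows "independent (v ` J)"
proof -
  have "finite J"
    using assms(3) finite_subset by blast
  have "DIM('a) - card J \<le> card ({..<N} - J)"
    using assms \<open>finite J\<close> by (simp add: card_Diff_subset)
  then obtain K where K: "K \<subseteq> {..<N} - J" "card K = DIM('a) - card J" "finite K"
    by (rule obtain_subset_with_card_n)
  then have "card (J \<union> K) = card J + card K"
    using \<open>finite J\<close> by (intro card_Un_disjoint) auto
  with K(2) assms(4) have "card (J \<union> K) = DIM('a)"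
    by simp
  moreover have "J \<union> K \<subseteq> {..<N}"
    using assms(3) \<open>K \<subseteq> {..<N} - J\<close> by blast
  ultimately have "independent (v ` (J \<union> K))"
    using assms(1) unfolding general_position_def by blast
  then show ?thesis
    using independent_mono[of "v ` (J \<union> K)" "v ` J"] by blast
qed

lemma general_position_bounded_solutions:
  fixes v :: "nat \<Rightarrow> 'a::euclidean_space"
  assumes "general_position N v" and "DIM('a) \<le> N"
  shows "\<exists>M\<ge>0. \<forall>J. J \<subseteq> {..<N} \<and> card J \<le> DIM('a) \<longrightarrow>
           (\<exists>w. norm w \<le> M \<and> (\<forall>j\<in>J. w \<bullet> v j = -1))"
proof -
  define small where "small = {J. J \<subseteq> {..<N} \<and> card J \<le> DIM('a)}"
  have "finite small"
    unfolding small_def by (rule finite_subset[of _ "Pow {..<N}"]) auto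
  have "eventually (\<lambda>M. \<exists>w. norm w \<le> M \<and> (\<forall>j\<in>J. w \<bullet> v j = -1)) at_top"
    if "J \<in> small" for J
  proof -
    have "independent (v ` J)"
      using general_position_independent_subset[OF assms] that unfolding small_def by blast
    then obtain w where w: "\<forall>b\<in>v ` J. w \<bullet> b = -1"
      using independent_exists_inner_eq[of "v ` J" "\<lambda>_. -1"] by blast
    show ?thesis
      using eventually_ge_at_top[of "norm w"] by eventually_elim (use w in auto)
  qed
  then have "eventually (\<lambda>M. \<forall>J\<in>small. \<exists>w. norm w \<le> M \<and> (\<forall>j\<in>J. w \<bullet> v j = -1)) at_top"
    using \<open>finite small\<close> by (simp add: eventually_ball_finite)
  then have "eventually (\<lambda>M. 0 \<le> M \<and> (\<forall>J\<in>small. \<exists>w. norm w \<le> M \<and> (\<forall>j\<in>J. w \<bullet> v j = -1))) at_top"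
    using eventually_ge_at_top[of 0] by eventually_elim blast
  then obtain M0 where "\<forall>M\<ge>M0. 0 \<le> M \<and> (\<forall>J\<in>small. \<exists>w. norm w \<le> M \<and> (\<forall>j\<in>J. w \<bullet> v j = -1))"
    unfolding eventually_at_top_linorder by blast
  then have "0 \<le> M0 \<and> (\<forall>J\<in>small. \<exists>w. norm w \<le> M0 \<and> (\<forall>j\<in>J. w \<bullet> v j = -1))"
    by blast
  then show ?thesis
    unfolding small_def by blast
qed

lemma midpoint_inner_slack:
  fixes a b v :: "'a::real_inner"
  assumes "a \<bullet> v \<le> z" and "b \<bullet> v \<le> z"
  shows "midpoint a b \<bullet> v + \<bar>(b - a) \<bullet> v\<bar> / 2 \<le> z"
  using assms by (auto simp: midpoint_def inner_add_left inner_diff_left abs_if field_simps)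

lemma cball_subset_polyhedron:
  fixes v :: "nat \<Rightarrow> 'a::real_inner"
  assumes "\<forall>j<N. norm (v j) \<le> 1" and "\<forall>j<N. c \<bullet> v j + r \<le> z j"
  shows "cball c r \<subseteq> {x. \<forall>j<N. x \<bullet> v j \<le> z j}"
proof clarify
  fix x j assume "x \<in> cball c r" "j < N"
  have "(x - c) \<bullet> v j \<le> norm (x - c) * norm (v j)"
    by (rule norm_cauchy_schwarz)
  also have "\<dots> \<le> norm (x - c)"
    using assms(1) \<open>j < N\<close> by (simp add: mult_left_le)
  also have "\<dots> \<le> r"
    using \<open>x \<in> cball c r\<close> by (simp add: dist_norm norm_minus_commute)
  finally have "(x - c) \<bullet> v j \<le> r" .
  moreover have "x \<bullet> v j = c \<bullet> v j + (x - c) \<bullet> v j"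
    by (simp add: inner_diff_left)
  moreover have "c \<bullet> v j + r \<le> z j"
    using assms(2) \<open>j < N\<close> by blast
  ultimately show "x \<bullet> v j \<le> z j"
    by linarith
qed

lemma polyhedron_contains_ball:
  fixes v :: "nat \<Rightarrow> 'a::euclidean_space"
  assumes unit: "\<forall>j<N. norm (v j) \<le> 1"
    and "0 \<le> \<delta>" and \<delta>: "\<And>x. card {j. j < N \<and> \<bar>v j \<bullet> x\<bar> < \<delta> * norm x} < DIM('a)"
    and "0 \<le> M"
    and M: "\<And>J. J \<subseteq> {..<N} \<Longrightarrow> card J \<le> DIM('a) \<Longrightarrow>
              \<exists>w. norm w \<le> M \<and> (\<forall>j\<in>J. w \<bullet> v j = -1)"
    and a: "\<forall>j<N. a \<bullet> v j \<le> z j" and b: "\<forall>j<N. b \<bullet> v j \<le> z j"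
  shows "\<exists>c. cball c (\<delta> / (2 * (M + 1)) * dist a b) \<subseteq> {x. \<forall>j<N. x \<bullet> v j \<le> z j}"
proof -
  define r where "r = \<delta> / (2 * (M + 1)) * dist a b"
  define J where "J = {j. j < N \<and> \<bar>v j \<bullet> (b - a)\<bar> < \<delta> * dist a b}"
  have "card J < DIM('a)"
    using \<delta>[of "b - a"] by (simp add: J_def dist_norm norm_minus_commute)
  then obtain w where "norm w \<le> M" and w: "\<forall>j\<in>J. w \<bullet> v j = -1"
    using M[of J] by (force simp: J_def)
  have "0 \<le> r" and r: "r * (M + 1) = \<delta> * dist a b / 2"
    using \<open>0 \<le> M\<close> \<open>0 \<le> \<delta>\<close> by (simp_all add: r_def field_simps)
  have "(midpoint a b + r *\<^sub>R w) \<bullet> v j + r \<le> z j" if "j < N" for j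
  proof -
    have slack: "midpoint a b \<bullet> v j + \<bar>(b - a) \<bullet> v j\<bar> / 2 \<le> z j"
      using a b \<open>j < N\<close> by (intro midpoint_inner_slack) auto
    show ?thesis
    proof (cases "j \<in> J")
      case True
      then show ?thesis
        using slack w by (simp add: inner_add_left)
    next
      case False
      \<comment> \<open>the midpoint has slack at least \<delta> * dist a b / 2 here,
        which absorbs r * (w \<bullet> v j + 1) \<le> r * (M + 1)\<close>
      then have "\<delta> * dist a b \<le> \<bar>(b - a) \<bullet> v j\<bar>"
        using \<open>j < N\<close> by (auto simp: J_def inner_commute)
      have "w \<bullet> v j \<le> norm w * norm (v j)"
        by (rule norm_cauchy_schwarz)
      also have "\<dots> \<le> norm w"
        using unit \<open>j < N\<close> by (simp add: mult_left_le)
      also have "\<dots> \<le> M"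
        by (fact \<open>norm w \<le> M\<close>)
      finally have "r * (w \<bullet> v j) + r \<le> r * (M + 1)"
        using \<open>0 \<le> r\<close> by (simp add: distrib_left mult_left_mono)
      with r slack \<open>\<delta> * dist a b \<le> _\<close> show ?thesis
        by (simp add: inner_add_left)
    qed
  qed
  then show ?thesis
    unfolding r_def[symmetric] using cball_subset_polyhedron[OF unit] by blast
qed

lemma outer_radius_le_diameter:
  fixes K :: "'a::euclidean_space set"
  assumes "bounded K" and "K \<noteq> {}"
  shows "outer_radius K \<le> diameter K"
  unfolding outer_radius_def
proof (rule cInf_lower)
  obtain a where "a \<in> K"
    using assms(2) by blast
  then show "diameter K \<in> {r. \<exists>c. K \<subseteq> cball c r}"
    using diameter_bounded_bound[OF assms(1)] by (auto simp: subset_iff)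
  show "bdd_below {r. \<exists>c. K \<subseteq> cball c r}"
    using \<open>a \<in> K\<close> by (intro bdd_belowI[of _ 0]) (force intro: order_trans[OF zero_le_dist])
qed

lemma inner_radius_ge:
  fixes K :: "'a::euclidean_space set"
  assumes "bounded K" and "0 \<le> r" and "cball c r \<subseteq> K"
  shows "r \<le> inner_radius K"
  unfolding inner_radius_def
proof (rule cSup_upper)
  show "r \<in> {r. 0 \<le> r \<and> (\<exists>c. cball c r \<subseteq> K)}"
    using assms(2,3) by blast
  have "2 * s \<le> diameter K" if "0 \<le> s" "cball d s \<subseteq> K" for s d
    using diameter_subset[OF that(2) assms(1)] that(1) by simp
  then show "bdd_above {r. 0 \<le> r \<and> (\<exists>c. cball c r \<subseteq> K)}"
    by (intro bdd_aboveI[of _ "diameter K / 2"]) force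
qed

lemma polyhedron_compact:
  fixes v :: "nat \<Rightarrow> 'a::euclidean_space"
  assumes "not_in_closed_hemisphere N v"
  shows "compact {x. \<forall>j<N. x \<bullet> v j \<le> z j}"
proof -
  have "{x. \<forall>j<N. x \<bullet> v j \<le> z j} = (\<Inter>j<N. {x. v j \<bullet> x \<le> z j})"
    by (auto simp: inner_commute)
  then have "closed {x. \<forall>j<N. x \<bullet> v j \<le> z j}"
    by (simp add: closed_INT closed_halfspace_le)
  with polyhedron_bounded[OF assms] show ?thesis
    by (simp add: compact_eq_bounded_closed)
qed

lemma polytope_class_inner_radius_ge_outer_radius:
  fixes v :: "nat \<Rightarrow> 'a::euclidean_space"
  assumes "\<forall>j<N. norm (v j) = 1"
    and hemisphere: "not_in_closed_hemisphere N v" and "general_position N v"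
  shows "\<exists>\<kappa>>0. \<forall>P\<in>polytope_class N v. \<kappa> * outer_radius P \<le> inner_radius P"
proof -
  obtain \<delta> where "0 < \<delta>" and \<delta>: "\<And>x. card {j. j < N \<and> \<bar>v j \<bullet> x\<bar> < \<delta> * norm x} < DIM('a)"
    using general_position_card_almost_orthogonal_less[OF assms(3)] by blast
  obtain M where "0 \<le> M" and M: "\<And>J. J \<subseteq> {..<N} \<Longrightarrow> card J \<le> DIM('a) \<Longrightarrow>
      \<exists>w. norm w \<le> M \<and> (\<forall>j\<in>J. w \<bullet> v j = -1)"
    using general_position_bounded_solutions[OF assms(3) not_in_closed_hemisphere_DIM_le[OF hemisphere]]
    by blast
  define \<kappa> where "\<kappa> = \<delta> / (2 * (M + 1))"
  have "0 < \<kappa>"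
    using \<open>0 < \<delta>\<close> \<open>0 \<le> M\<close> by (simp add: \<kappa>_def)
  have "\<kappa> * outer_radius P \<le> inner_radius P" if P_in: "P \<in> polytope_class N v" for P
  proof -
    obtain z where P: "P = {x. \<forall>j<N. x \<bullet> v j \<le> z j}" and "interior P \<noteq> {}"
      using P_in unfolding polytope_class_def by blast
    have "P \<noteq> {}"
      using \<open>interior P \<noteq> {}\<close> interior_subset by blast
    have "compact P"
      unfolding P by (rule polyhedron_compact[OF hemisphere])
    with \<open>P \<noteq> {}\<close> obtain a b where "a \<in> P" "b \<in> P" and ab: "dist a b = diameter P"
      using diameter_compact_attained by blast
    then obtain c where "cball c (\<kappa> * diameter P) \<subseteq> P"
      using polyhedron_contains_ball[of N v \<delta> M a z b] assms(1) \<open>0 < \<delta>\<close> \<delta> \<open>0 \<le> M\<close> M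
      unfolding P \<kappa>_def by (auto simp: ab)
    have "outer_radius P \<le> diameter P"
      using \<open>compact P\<close> \<open>P \<noteq> {}\<close> by (simp add: compact_imp_bounded outer_radius_le_diameter)
    then have "\<kappa> * outer_radius P \<le> \<kappa> * diameter P"
      using \<open>0 < \<kappa>\<close> by simp
    also have "\<dots> \<le> inner_radius P"
      using \<open>cball c (\<kappa> * diameter P) \<subseteq> P\<close> \<open>compact P\<close> \<open>0 < \<kappa>\<close>
      by (intro inner_radius_ge) (auto simp: compact_imp_bounded diameter_ge_0)
    finally show ?thesis .
  qed
  with \<open>0 < \<kappa>\<close> show ?thesis by blast
qed

theorem lemma3p4:
  fixes v :: "nat \<Rightarrow> 'a::euclidean_space" and N :: nat
    and P :: "nat \<Rightarrow> 'a set"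
  assumes "DIM('a) \<ge> 2"
    and "\<forall>j<N. norm (v j) = 1"
    and "not_in_closed_hemisphere N v"
    and "general_position N v"
    and "\<forall>i. P i \<in> polytope_class N v"
    and "\<not> bdd_above (range (\<lambda>i. outer_radius (P i)))"
  shows "\<not> bdd_above (range (\<lambda>i. inner_radius (P i)))"
proof
  assume "bdd_above (range (\<lambda>i. inner_radius (P i)))"
  then obtain B where B: "\<And>i. inner_radius (P i) \<le> B"
    by (auto simp: bdd_above_def)
  obtain \<kappa> where "0 < \<kappa>" and \<kappa>: "\<forall>Q\<in>polytope_class N v. \<kappa> * outer_radius Q \<le> inner_radius Q"
    using polytope_class_inner_radius_ge_outer_radius[OF assms(2-4)] by blast
  have "\<kappa> * outer_radius (P i) \<le> B" for i
  proof -
    have "\<kappa> * outer_radius (P i) \<le> inner_radius (P i)"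
      using \<kappa> assms(5) by blast
    with B[of i] show ?thesis by linarith
  qed
  then have "outer_radius (P i) \<le> B / \<kappa>" for i
    using \<open>0 < \<kappa>\<close> by (simp add: pos_le_divide_eq mult.commute)
  then have "bdd_above (range (\<lambda>i. outer_radius (P i)))"
    by (intro bdd_aboveI[of _ "B / \<kappa>"]) auto
  with assms(6) show False ..
qed

end
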